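(* Let $G=(V,E)$ be an undirected graph (finite or infinite) with $|V|>2$. If $G$ is decomposable and has a color class $\widehat A$ with $\widetilde A=V$, then $G$ has a non-trivial maximal ``strong'' partitive set, i.e. a ``strong'' partitive set $X$ with $|X|\ge2$ and $X\neq V$ which is maximal for inclusion among the ``strong'' partitive sets of $G$ different from $V$.
   Context: A graph $G=(V,E)$ has vertex set $V$ and edge set $E\subseteq V^2$; it is undirected if $E$ is irreflexive and symmetric. A set $X\subseteq V$ is a partitive set of $G$ if for all $a,b\in X$ and $c\in V\setminus X$: $(a,c)\in E\Leftrightarrow(b,c)\in E$ and $(c,a)\in E\Leftrightarrow(c,b)\in E$; $I(G)$ is the class of partitive sets; a partitive set is trivial if it is a singleton or $V$. $G$ is indecomposable if all its partitive sets are trivial, decomposable otherwise. A ``strong'' partitive set is an $X\in I(G)$ such that for every $Y\in I(G)$ with $X\cap Y\neq\emptyset$, $X\subseteq Y$ or $Y\subseteq X$. Implication classes: on $E$ define $(a,b)\Gamma(a',b')$ iff either $a=a'$ and $(b,b')\notin E$, or $b=b'$ and $(a,a')\notin E$; the classes of the transitive closure $\Gamma^*$ are the implication classes. For an implication class $A$, $A^{-1}=\{(b,a):(a,b)\in A\}$ and the color class is $\widehat A=A\cup A^{-1}$; $\widetilde A$ is the set of vertices spanned by $\widehat A$. *)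

theory Defs
  imports Main
begin

definition graph :: "'a set \<Rightarrow> ('a \<times> 'a) set \<Rightarrow> bool" where
  "graph V E \<longleftrightarrow> E \<subseteq> V \<times> V"

definition undirected :: "'a set \<Rightarrow> ('a \<times> 'a) set \<Rightarrow> bool" where
  "undirected V E \<longleftrightarrow> graph V E \<and> irrefl E \<and> sym E"

definition partitive :: "'a set \<Rightarrow> ('a \<times> 'a) set \<Rightarrow> 'a set \<Rightarrow> bool" where
  "partitive V E X \<longleftrightarrow> X \<subseteq> V \<and>
     (\<forall>a\<in>X. \<forall>b\<in>X. \<forall>c\<in>V - X.
        ((a, c) \<in> E \<longleftrightarrow> (b, c) \<in> E) \<and> ((c, a) \<in> E \<longleftrightarrow> (c, b) \<in> E))"

definition trivial_set :: "'a set \<Rightarrow> 'a set \<Rightarrow> bool" where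
  "trivial_set V X \<longleftrightarrow> X = {} \<or> (\<exists>x. X = {x}) \<or> X = V"

definition indecomposable :: "'a set \<Rightarrow> ('a \<times> 'a) set \<Rightarrow> bool" where
  "indecomposable V E \<longleftrightarrow> (\<forall>X. partitive V E X \<longrightarrow> trivial_set V X)"

definition decomposable :: "'a set \<Rightarrow> ('a \<times> 'a) set \<Rightarrow> bool" where
  "decomposable V E \<longleftrightarrow> \<not> indecomposable V E"

definition strong_partitive :: "'a set \<Rightarrow> ('a \<times> 'a) set \<Rightarrow> 'a set \<Rightarrow> bool" where
  "strong_partitive V E X \<longleftrightarrow> partitive V E X \<and>
     (\<forall>Y. partitive V E Y \<and> X \<inter> Y \<noteq> {} \<longrightarrow> X \<subseteq> Y \<or> Y \<subseteq> X)"

definition Gamma :: "('a \<times> 'a) set \<Rightarrow> (('a \<times> 'a) \<times> ('a \<times> 'a)) set" where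
  "Gamma E = {((a, b), (a', b')). (a, b) \<in> E \<and> (a', b') \<in> E \<and>
      ((a = a' \<and> (b, b') \<notin> E) \<or> (b = b' \<and> (a, a') \<notin> E))}"

definition implication_class :: "('a \<times> 'a) set \<Rightarrow> ('a \<times> 'a) set \<Rightarrow> bool" where
  "implication_class E A \<longleftrightarrow> (\<exists>e\<in>E. A = {e' \<in> E. (e, e') \<in> (Gamma E)\<^sup>*})"

definition color_class :: "('a \<times> 'a) set \<Rightarrow> ('a \<times> 'a) set" where
  "color_class A = A \<union> A\<inverse>"

definition spanned :: "('a \<times> 'a) set \<Rightarrow> 'a set" where
  "spanned A = Domain (color_class A) \<union> Range (color_class A)"

end

theory Submission
  imports Defs
begin

text \<open>Partitive sets are closed under the relation Gamma: if a partitive set contains both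
  endpoints of an edge, it contains both endpoints of every edge of the same implication class.
  When the class spans V, a proper partitive set therefore contains no edge of the class, and so
  two proper partitive sets sharing a vertex p cannot cover V, since a neighbour of p in the
  colour class would lie in one of them together with p. Hence the union S of all proper
  partitive sets containing a given non-trivial partitive set is itself proper and partitive,
  and it is maximal among the proper partitive sets. Maximality makes S strong: a partitive set
  Y meeting S is either V or gives the proper partitive set S \<union> Y, which must be S.\<close>

lemma partitive_subset: "partitive V E X \<Longrightarrow> X \<subseteq> V"
  unfolding partitive_def by blast

lemma undirected_edge_in_V:
  assumes "undirected V E" "(a, b) \<in> E"
  shows "a \<in> V" "b \<in> V"
  using assms unfolding undirected_def graph_def by auto

lemma partitive_Gamma_closed:
  assumes und: "undirected V E" and X: "partitive V E X"
    and Gamma: "((a, b), (a', b')) \<in> Gamma E" and ab: "a \<in> X" "b \<in> X"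
  shows "a' \<in> X \<and> b' \<in> X"
proof -
  have edge: "(a', b') \<in> E"
    and step: "(a = a' \<and> (b, b') \<notin> E) \<or> (b = b' \<and> (a, a') \<notin> E)"
    using Gamma unfolding Gamma_def by auto
  have "sym E" using und unfolding undirected_def by blast
  from step show ?thesis
  proof
    assume step: "a = a' \<and> (b, b') \<notin> E"
    have "b' \<in> X"
    proof (rule ccontr)
      assume "b' \<notin> X"
      then have "(a, b') \<in> E \<longleftrightarrow> (b, b') \<in> E"
        using X ab undirected_edge_in_V[OF und edge] unfolding partitive_def by blast
      then show False using step edge by blast
    qed
    then show ?thesis using step ab by blast
  next
    assume step: "b = b' \<and> (a, a') \<notin> E"
    have "a' \<in> X"
    proof (rule ccontr)
      assume "a' \<notin> X"
      then have "(a', a) \<in> E \<longleftrightarrow> (a', b) \<in> E"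
        using X ab undirected_edge_in_V[OF und edge] unfolding partitive_def by blast
      then show False using step edge \<open>sym E\<close> by (auto dest: symD)
    qed
    then show ?thesis using step ab by blast
  qed
qed

lemma partitive_Gamma_rtrancl_closed:
  assumes "undirected V E" "partitive V E X"
    and "((a, b), (a', b')) \<in> (Gamma E)\<^sup>*" "a \<in> X" "b \<in> X"
  shows "a' \<in> X \<and> b' \<in> X"
  using assms(3-5)
proof (induction "(a', b')" arbitrary: a' b' rule: rtrancl_induct)
  case (step e)
  then show ?case
    using partitive_Gamma_closed[OF assms(1,2)] by (cases e) blast
qed simp

lemma sym_Gamma: "sym E \<Longrightarrow> sym (Gamma E)"
  unfolding sym_def Gamma_def by auto

lemma implication_class_rtrancl:
  assumes "sym E" "implication_class E A" "e \<in> A" "e' \<in> A"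
  shows "(e, e') \<in> (Gamma E)\<^sup>*"
proof -
  obtain e0 where A: "A = {e' \<in> E. (e0, e') \<in> (Gamma E)\<^sup>*}"
    using assms(2) unfolding implication_class_def by blast
  have "sym ((Gamma E)\<^sup>*)"
    using sym_Gamma[OF assms(1)] by (rule sym_rtrancl)
  then show ?thesis
    using assms(3,4) unfolding A by (blast dest: symD intro: rtrancl_trans)
qed

lemma partitive_Union:
  assumes "\<And>W. W \<in> F \<Longrightarrow> partitive V E W" and "\<And>W. W \<in> F \<Longrightarrow> p \<in> W"
  shows "partitive V E (\<Union>F)"
  unfolding partitive_def
proof (intro conjI ballI)
  show "\<Union>F \<subseteq> V" using assms(1) partitive_subset by blast
next
  fix a b c assume "a \<in> \<Union>F" "b \<in> \<Union>F" and c: "c \<in> V - \<Union>F"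
  have like_p: "((x, c) \<in> E \<longleftrightarrow> (p, c) \<in> E) \<and> ((c, x) \<in> E \<longleftrightarrow> (c, p) \<in> E)"
    if "x \<in> \<Union>F" for x
  proof -
    obtain W where "W \<in> F" "x \<in> W" using \<open>x \<in> \<Union>F\<close> by blast
    then show ?thesis
      using assms[OF \<open>W \<in> F\<close>] c unfolding partitive_def by blast
  qed
  show "(a, c) \<in> E \<longleftrightarrow> (b, c) \<in> E" "(c, a) \<in> E \<longleftrightarrow> (c, b) \<in> E"
    using like_p[OF \<open>a \<in> \<Union>F\<close>] like_p[OF \<open>b \<in> \<Union>F\<close>] by blast+
qed

lemma partitive_Un:
  assumes "partitive V E X" "partitive V E Y" "p \<in> X" "p \<in> Y"
  shows "partitive V E (X \<union> Y)"
  using partitive_Union[of "{X, Y}" V E p] assms by auto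

lemma decomposableE:
  assumes "decomposable V E"
  obtains M a b where "partitive V E M" "M \<noteq> V" "a \<in> M" "b \<in> M" "a \<noteq> b"
proof -
  obtain M where M: "partitive V E M" "\<not> trivial_set V M"
    using assms unfolding decomposable_def indecomposable_def by blast
  then obtain a where "a \<in> M" unfolding trivial_set_def by blast
  moreover obtain b where "b \<in> M" "b \<noteq> a"
    using M(2) \<open>a \<in> M\<close> unfolding trivial_set_def by blast
  moreover have "M \<noteq> V" using M(2) unfolding trivial_set_def by blast
  ultimately show ?thesis using that M(1) by blast
qed

locale spanning_implication_class =
  fixes V :: "'a set" and E :: "('a \<times> 'a) set" and A :: "('a \<times> 'a) set"
  assumes undirected: "undirected V E"
    and implication_class: "implication_class E A"
    and spans: "spanned A = V"
begin

lemma partitive_eq_V_if_contains_class_edge: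
  assumes X: "partitive V E X" and ab: "(a, b) \<in> A" "a \<in> X" "b \<in> X"
  shows "X = V"
proof -
  have "sym E" using undirected unfolding undirected_def by blast
  have "c \<in> X \<and> d \<in> X" if "(c, d) \<in> A" for c d
    using partitive_Gamma_rtrancl_closed[OF undirected X _ ab(2,3)]
      implication_class_rtrancl[OF \<open>sym E\<close> implication_class ab(1) that] by blast
  then have "V \<subseteq> X"
    using spans unfolding spanned_def color_class_def by blast
  then show ?thesis using partitive_subset[OF X] by blast
qed

lemma Union_proper_partitive_neq_V:
  assumes F: "\<And>W. W \<in> F \<Longrightarrow> partitive V E W \<and> W \<noteq> V \<and> p \<in> W" and "F \<noteq> {}"
  shows "\<Union>F \<noteq> V"
proof
  assume cover: "\<Union>F = V"
  have "p \<in> V" using F \<open>F \<noteq> {}\<close> partitive_subset by blast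
  then obtain q where pq: "(p, q) \<in> A \<or> (q, p) \<in> A"
    using spans unfolding spanned_def color_class_def by blast
  have "A \<subseteq> E"
    using implication_class unfolding implication_class_def by blast
  then have "q \<in> V" using pq undirected_edge_in_V[OF undirected] by blast
  then obtain W where "W \<in> F" "q \<in> W" using cover by blast
  then show False
    using pq F[OF \<open>W \<in> F\<close>] partitive_eq_V_if_contains_class_edge[of W p q]
      partitive_eq_V_if_contains_class_edge[of W q p] by blast
qed

lemma maximal_proper_partitive_superset:
  assumes M: "partitive V E M" "M \<noteq> {}" "M \<noteq> V"
  obtains S where "partitive V E S" "S \<noteq> V" "M \<subseteq> S"
    "\<And>Y. partitive V E Y \<Longrightarrow> Y \<noteq> V \<Longrightarrow> S \<subseteq> Y \<Longrightarrow> Y = S"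
proof -
  define F where "F = {W. partitive V E W \<and> W \<noteq> V \<and> M \<subseteq> W}"
  obtain p where "p \<in> M" using M(2) by blast
  have "M \<in> F" using M unfolding F_def by blast
  have "partitive V E (\<Union>F)"
    by (rule partitive_Union[where p = p]) (use \<open>p \<in> M\<close> in \<open>auto simp: F_def\<close>)
  moreover have "\<Union>F \<noteq> V"
    by (rule Union_proper_partitive_neq_V[where p = p]) (use \<open>p \<in> M\<close> \<open>M \<in> F\<close> in \<open>auto simp: F_def\<close>)
  moreover have "M \<subseteq> \<Union>F" using \<open>M \<in> F\<close> by blast
  moreover have "Y = \<Union>F" if "partitive V E Y" "Y \<noteq> V" "\<Union>F \<subseteq> Y" for Y
  proof -
    have "Y \<in> F" using that \<open>M \<in> F\<close> unfolding F_def by blast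
    then show ?thesis using \<open>\<Union>F \<subseteq> Y\<close> by blast
  qed
  ultimately show ?thesis by (rule that)
qed

lemma strong_partitive_if_maximal_proper:
  assumes S: "partitive V E S" "S \<noteq> V"
    and maximal: "\<And>Y. partitive V E Y \<Longrightarrow> Y \<noteq> V \<Longrightarrow> S \<subseteq> Y \<Longrightarrow> Y = S"
  shows "strong_partitive V E S"
  unfolding strong_partitive_def
proof (intro conjI allI impI)
  fix Y assume Y: "partitive V E Y \<and> S \<inter> Y \<noteq> {}"
  then obtain p where "p \<in> S" "p \<in> Y" by blast
  show "S \<subseteq> Y \<or> Y \<subseteq> S"
  proof (cases "Y = V")
    case True
    then show ?thesis using partitive_subset[OF S(1)] by blast
  next
    case False
    have "S \<union> Y \<noteq> V"
      using Union_proper_partitive_neq_V[of "{S, Y}" p] S Y False \<open>p \<in> S\<close> \<open>p \<in> Y\<close> by auto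
    then have "S \<union> Y = S"
      using maximal partitive_Un[OF S(1)] Y \<open>p \<in> S\<close> \<open>p \<in> Y\<close> by blast
    then show ?thesis by blast
  qed
qed (fact S(1))

end

theorem lemma3p8:
  fixes V :: "'a set" and E :: "('a \<times> 'a) set"
  assumes "undirected V E"
    and "infinite V \<or> card V > 2"
    and "decomposable V E"
    and "\<exists>A. implication_class E A \<and> spanned A = V"
  shows "\<exists>X. strong_partitive V E X \<and> (\<exists>a b. a \<in> X \<and> b \<in> X \<and> a \<noteq> b) \<and> X \<noteq> V \<and>
           (\<forall>Y. strong_partitive V E Y \<and> Y \<noteq> V \<and> X \<subseteq> Y \<longrightarrow> Y = X)"
proof -
  obtain A where "implication_class E A" "spanned A = V" using assms(4) by blast
  with assms(1) interpret spanning_implication_class V E A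
    by (rule spanning_implication_class.intro)
  obtain M a b where M: "partitive V E M" "M \<noteq> V" "a \<in> M" "b \<in> M" "a \<noteq> b"
    using decomposableE[OF assms(3)] .
  then have "M \<noteq> {}" by blast
  obtain S where S: "partitive V E S" "S \<noteq> V" "M \<subseteq> S"
    and maximal: "\<And>Y. partitive V E Y \<Longrightarrow> Y \<noteq> V \<Longrightarrow> S \<subseteq> Y \<Longrightarrow> Y = S"
    using maximal_proper_partitive_superset[OF M(1) \<open>M \<noteq> {}\<close> M(2)] by blast
  show ?thesis
  proof (intro exI conjI allI impI)
    show "strong_partitive V E S"
      using strong_partitive_if_maximal_proper[OF S(1,2) maximal] .
    show "a \<in> S" "b \<in> S" "a \<noteq> b" "S \<noteq> V" using M S by blast+
    show "Y = S" if "strong_partitive V E Y \<and> Y \<noteq> V \<and> S \<subseteq> Y" for Y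
      using maximal that unfolding strong_partitive_def by blast
  qed
qed

end
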